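(* Let $\pi$ be a projective plane of order $q$, and let $n,s,t\in\mathbb{N}$ be such that $q=(n+1)^2$ and $q\ge s,t>q-n$. Then, for $s\ne t$, \[ n_\pi(K_{s,t})=2\binom{q^2+q+1}{2}\binom{q}{s}\binom{q}{t}, \] and \[ n_\pi(K_{s,s})=\binom{q^2+q+1}{2}\binom{q}{s}^2. \]
   Context: $K_{s,t}$ is the complete bipartite graph with classes of sizes $s,t$. A finite projective plane of order $q$ has $q^2+q+1$ points and lines, $q+1$ points on each line and $q+1$ lines through each point; any two distinct points lie on a unique line and any two lines meet in a unique point. An embedding of a simple graph $G=(V,E)$ into $\pi$ is an injective map $\phi$ from $V$ to the points of $\pi$ such that the induced map sending an edge $ab$ to the line through $\phi(a),\phi(b)$ is injective on $E$. Two embeddings $\phi,\psi$ are equivalent if $\psi=\phi\circ\alpha$ for some graph automorphism $\alpha$ of $G$; $n_\pi(G)$ is the number of equivalence classes (equivalently, the number of distinct images of $G$ in $\pi$). *)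

theory Defs
  imports Main "HOL-Library.FuncSet"
begin

definition projective_plane :: "'p set \<Rightarrow> 'l set \<Rightarrow> ('p \<Rightarrow> 'l \<Rightarrow> bool) \<Rightarrow> nat \<Rightarrow> bool" where
  "projective_plane P L inc q \<longleftrightarrow>
     finite P \<and> finite L \<and>
     card P = q^2 + q + 1 \<and> card L = q^2 + q + 1 \<and>
     (\<forall>l\<in>L. card {p\<in>P. inc p l} = q + 1) \<and>
     (\<forall>p\<in>P. card {l\<in>L. inc p l} = q + 1) \<and>
     (\<forall>p\<in>P. \<forall>p'\<in>P. p \<noteq> p' \<longrightarrow> (\<exists>!l. l \<in> L \<and> inc p l \<and> inc p' l)) \<and>
     (\<forall>l\<in>L. \<forall>l'\<in>L. l \<noteq> l' \<longrightarrow> (\<exists>!p. p \<in> P \<and> inc p l \<and> inc p l'))"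

definition edge_line :: "'l set \<Rightarrow> ('p \<Rightarrow> 'l \<Rightarrow> bool) \<Rightarrow> ('v \<Rightarrow> 'p) \<Rightarrow> 'v set \<Rightarrow> 'l" where
  "edge_line L inc \<phi> e = (THE l. l \<in> L \<and> (\<forall>x\<in>e. inc (\<phi> x) l))"

definition is_embedding :: "'p set \<Rightarrow> 'l set \<Rightarrow> ('p \<Rightarrow> 'l \<Rightarrow> bool) \<Rightarrow> 'v set \<Rightarrow> 'v set set \<Rightarrow> ('v \<Rightarrow> 'p) \<Rightarrow> bool" where
  "is_embedding P L inc V E \<phi> \<longleftrightarrow>
     inj_on \<phi> V \<and> \<phi> ` V \<subseteq> P \<and> inj_on (edge_line L inc \<phi>) E"

definition embeddings :: "'p set \<Rightarrow> 'l set \<Rightarrow> ('p \<Rightarrow> 'l \<Rightarrow> bool) \<Rightarrow> 'v set \<Rightarrow> 'v set set \<Rightarrow> ('v \<Rightarrow> 'p) set" where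
  "embeddings P L inc V E = {\<phi>. \<phi> \<in> extensional V \<and> is_embedding P L inc V E \<phi>}"

definition graph_aut :: "'v set \<Rightarrow> 'v set set \<Rightarrow> ('v \<Rightarrow> 'v) \<Rightarrow> bool" where
  "graph_aut V E \<alpha> \<longleftrightarrow> bij_betw \<alpha> V V \<and>
     (\<forall>a\<in>V. \<forall>b\<in>V. {a, b} \<in> E \<longleftrightarrow> {\<alpha> a, \<alpha> b} \<in> E)"

definition emb_equiv :: "'p set \<Rightarrow> 'l set \<Rightarrow> ('p \<Rightarrow> 'l \<Rightarrow> bool) \<Rightarrow> 'v set \<Rightarrow> 'v set set \<Rightarrow> (('v \<Rightarrow> 'p) \<times> ('v \<Rightarrow> 'p)) set" where
  "emb_equiv P L inc V E = {(\<phi>, \<psi>). \<phi> \<in> embeddings P L inc V E \<and> \<psi> \<in> embeddings P L inc V E \<and>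
     (\<exists>\<alpha>. graph_aut V E \<alpha> \<and> (\<forall>v\<in>V. \<psi> v = \<phi> (\<alpha> v)))}"

definition n_pi :: "'p set \<Rightarrow> 'l set \<Rightarrow> ('p \<Rightarrow> 'l \<Rightarrow> bool) \<Rightarrow> 'v set \<Rightarrow> 'v set set \<Rightarrow> nat" where
  "n_pi P L inc V E = card (embeddings P L inc V E // emb_equiv P L inc V E)"

definition K_V :: "nat \<Rightarrow> nat \<Rightarrow> (nat + nat) set" where
  "K_V s t = Inl ` {..<s} \<union> Inr ` {..<t}"

definition K_E :: "nat \<Rightarrow> nat \<Rightarrow> (nat + nat) set set" where
  "K_E s t = {{Inl i, Inr j} | i j. i < s \<and> j < t}"

end

theory Submission
  imports Defs
begin

text \<open>
  Up to automorphisms of K_{s,t}, an embedding is determined by the unordered pair \<open>{A, B}\<close> of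
  images of its two sides, and a pair of disjoint point sets occurs in this way iff the lines
  \<open>ab\<close> (\<open>a \<in> A\<close>, \<open>b \<in> B\<close>) are pairwise distinct. If \<open>|A|, |B| > q - n\<close> with \<open>q = (n + 1)\<^sup>2\<close>,
  such a \<open>B\<close> is collinear: otherwise, since the \<open>q + 1\<close> lines through \<open>b \<in> B\<close> include the
  \<open>|A|\<close> lines \<open>ab\<close>, at most \<open>n\<close> of them meet \<open>B\<close> again, and projecting from a point of \<open>B\<close> off
  a line shows that every line carries at most \<open>n\<close> points of \<open>B\<close>; so \<open>|B| \<le> 1 + n(n - 1)\<close>,
  a contradiction. Hence \<open>A\<close> and \<open>B\<close> lie on distinct lines \<open>l\<close>, \<open>m\<close> and avoid \<open>m\<close>, \<open>l\<close>
  respectively, every such configuration is admissible, and counting the ordered pairs of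
  lines and the subsets on them gives the formula; for \<open>s = t\<close> swapping the sides halves it.
\<close>

lemma card_quotient_eq_card_image:
  assumes "R \<subseteq> X \<times> X" and "\<And>x y. x \<in> X \<Longrightarrow> y \<in> X \<Longrightarrow> (x, y) \<in> R \<longleftrightarrow> f x = f y"
  shows "card (X // R) = card (f ` X)"
proof -
  have "R `` {x} = {y\<in>X. f y = f x}" if "x \<in> X" for x
    using assms that by auto
  then have "X // R = (\<lambda>z. {y\<in>X. f y = z}) ` f ` X"
    unfolding quotient_def by auto
  moreover have "inj_on (\<lambda>z. {y\<in>X. f y = z}) (f ` X)"
    by (rule inj_onI) blast
  ultimately show ?thesis
    by (simp add: card_image)
qed

lemma card_eq_twice_card_doubletons:
  assumes "finite X" and "\<And>A B. (A, B) \<in> X \<Longrightarrow> (B, A) \<in> X" and "\<And>A B. (A, B) \<in> X \<Longrightarrow> A \<noteq> B"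
  shows "card X = 2 * card ((\<lambda>(A, B). {A, B}) ` X)"
proof -
  let ?D = "\<lambda>(A, B). {A, B}"
  have fibre: "card {x\<in>X. ?D x = S} = 2" if S: "S \<in> ?D ` X" for S
  proof -
    obtain A B where "(A, B) \<in> X" and "S = {A, B}"
      using S by fastforce
    then have "{x\<in>X. ?D x = S} = {(A, B), (B, A)}"
      using assms(2) by (auto simp: doubleton_eq_iff)
    then show ?thesis
      using assms(3)[OF \<open>(A, B) \<in> X\<close>] by simp
  qed
  have "X = (\<Union>S\<in>?D ` X. {x\<in>X. ?D x = S})"
    by auto
  also have "card \<dots> = (\<Sum>S\<in>?D ` X. card {x\<in>X. ?D x = S})"
    by (rule card_UN_disjoint) (use assms(1) in auto)
  also have "\<dots> = 2 * card (?D ` X)"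
    using fibre by simp
  finally show ?thesis .
qed

lemma inj_on_doubletons_if_card_neq:
  assumes "\<And>A B. (A, B) \<in> X \<Longrightarrow> card A = s \<and> card B = t" and "s \<noteq> t"
  shows "inj_on (\<lambda>(A, B). {A, B}) X"
proof (rule inj_onI, clarify)
  fix A B A' B'
  assume "(A, B) \<in> X" "(A', B') \<in> X" "{A, B} = {A', B'}"
  then show "A = A' \<and> B = B'"
    using assms by (metis doubleton_eq_iff)
qed

lemma two_distinct_elements:
  assumes "2 \<le> card A"
  obtains x y where "x \<in> A" and "y \<in> A" and "x \<noteq> y"
  using assms by (auto simp: numeral_2_eq_2 card_le_Suc_iff)

lemma K_E_iff:
  assumes "u \<in> K_V s t" and "v \<in> K_V s t"
  shows "{u, v} \<in> K_E s t \<longleftrightarrow> isl u \<noteq> isl v"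
  using assms unfolding K_V_def K_E_def by (cases u; cases v) (auto simp: doubleton_eq_iff)

definition K_side :: "nat \<Rightarrow> nat \<Rightarrow> bool \<Rightarrow> (nat + nat) set" where
  "K_side s t d = {v \<in> K_V s t. isl v = d}"

lemma K_side_True: "K_side s t True = Inl ` {..<s}"
  and K_side_False: "K_side s t False = Inr ` {..<t}"
  unfolding K_side_def K_V_def by auto

lemma graph_aut_K_iff:
  assumes "bij_betw \<alpha> (K_V s t) (K_V s t)"
  shows "graph_aut (K_V s t) (K_E s t) \<alpha> \<longleftrightarrow>
    (\<forall>u\<in>K_V s t. \<forall>v\<in>K_V s t. isl u \<noteq> isl v \<longleftrightarrow> isl (\<alpha> u) \<noteq> isl (\<alpha> v))"
proof -
  have "{\<alpha> u, \<alpha> v} \<in> K_E s t \<longleftrightarrow> isl (\<alpha> u) \<noteq> isl (\<alpha> v)" if "u \<in> K_V s t" "v \<in> K_V s t" for u v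
    using K_E_iff[OF bij_betw_apply[OF assms that(1)] bij_betw_apply[OF assms that(2)]] .
  then show ?thesis
    using assms by (simp add: graph_aut_def K_E_iff)
qed

lemma graph_aut_K_fixes_or_swaps_sides:
  assumes "graph_aut (K_V s t) (K_E s t) \<alpha>" and "0 < s"
  obtains c where "\<And>v. v \<in> K_V s t \<Longrightarrow> isl (\<alpha> v) \<longleftrightarrow> (isl v \<longleftrightarrow> c)"
proof -
  have "bij_betw \<alpha> (K_V s t) (K_V s t)"
    using assms(1) unfolding graph_aut_def by blast
  then have sides_preserved: "isl u \<noteq> isl v \<longleftrightarrow> isl (\<alpha> u) \<noteq> isl (\<alpha> v)"
    if "u \<in> K_V s t" "v \<in> K_V s t" for u v
    using assms(1) that by (simp add: graph_aut_K_iff)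
  have "Inl 0 \<in> K_V s t"
    using \<open>0 < s\<close> unfolding K_V_def by auto
  then have "isl (\<alpha> v) \<longleftrightarrow> (isl v \<longleftrightarrow> isl (\<alpha> (Inl 0)))" if "v \<in> K_V s t" for v
    using sides_preserved[OF _ that] by fastforce
  then show ?thesis
    using that by blast
qed

lemma graph_aut_K_maps_sides:
  assumes "graph_aut (K_V s t) (K_E s t) \<alpha>" and "0 < s"
  obtains c where "\<And>d. \<alpha> ` K_side s t d = K_side s t (d = c)"
proof -
  obtain c where c: "\<And>v. v \<in> K_V s t \<Longrightarrow> isl (\<alpha> v) \<longleftrightarrow> (isl v \<longleftrightarrow> c)"
    using graph_aut_K_fixes_or_swaps_sides[OF assms] by blast
  have bij: "bij_betw \<alpha> (K_V s t) (K_V s t)"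
    using assms(1) unfolding graph_aut_def by blast
  have "\<alpha> ` K_side s t d = K_side s t (d = c)" for d
  proof
    show "\<alpha> ` K_side s t d \<subseteq> K_side s t (d = c)"
      unfolding K_side_def using c bij bij_betwE by fastforce
    show "K_side s t (d = c) \<subseteq> \<alpha> ` K_side s t d"
    proof
      fix w
      assume w: "w \<in> K_side s t (d = c)"
      then obtain v where "v \<in> K_V s t" and "w = \<alpha> v"
        using bij unfolding K_side_def bij_betw_def by auto
      then show "w \<in> \<alpha> ` K_side s t d"
        using w c unfolding K_side_def by auto
    qed
  qed
  then show ?thesis
    using that by blast
qed

lemma graph_aut_K_from_side_images:
  assumes inj: "inj_on \<phi> (K_V s t)" "inj_on \<psi> (K_V s t)"
    and sides: "\<And>d. \<psi> ` K_side s t d = \<phi> ` K_side s t (d = c)"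
  shows "\<exists>\<alpha>. graph_aut (K_V s t) (K_E s t) \<alpha> \<and> (\<forall>v\<in>K_V s t. \<psi> v = \<phi> (\<alpha> v))"
proof -
  let ?V = "K_V s t"
  have "?V = K_side s t True \<union> K_side s t False"
    unfolding K_side_def by auto
  then have same_image: "\<psi> ` ?V = \<phi> ` ?V"
    using sides[of True] sides[of False] by (cases c) auto
  define \<alpha> where "\<alpha> = inv_into ?V \<phi> \<circ> \<psi>"
  have bij: "bij_betw \<alpha> ?V ?V"
    unfolding \<alpha>_def using inj same_image by (metis bij_betw_imageI bij_betw_inv_into bij_betw_trans)
  have \<alpha>: "\<phi> (\<alpha> v) = \<psi> v" if "v \<in> ?V" for v
    unfolding \<alpha>_def using that same_image by (metis comp_apply f_inv_into_f imageI)
  have "isl (\<alpha> v) \<longleftrightarrow> (isl v \<longleftrightarrow> c)" if v: "v \<in> ?V" for v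
  proof -
    have "\<psi> v \<in> \<phi> ` K_side s t (isl v = c)"
      using sides[of "isl v"] v unfolding K_side_def by blast
    then obtain w where "w \<in> K_side s t (isl v = c)" and "\<phi> w = \<phi> (\<alpha> v)"
      using \<alpha>[OF v] by auto
    moreover have "\<alpha> v \<in> ?V"
      using bij v bij_betwE by blast
    ultimately show ?thesis
      using inj_onD[OF inj(1)] unfolding K_side_def by fastforce
  qed
  then have "graph_aut ?V (K_E s t) \<alpha>"
    using bij by (auto simp: graph_aut_K_iff)
  then show ?thesis
    using \<alpha> by auto
qed

lemma K_related_iff_same_sides:
  assumes "inj_on \<phi> (K_V s t)" and "inj_on \<psi> (K_V s t)" and "0 < s"
  shows "(\<exists>\<alpha>. graph_aut (K_V s t) (K_E s t) \<alpha> \<and> (\<forall>v\<in>K_V s t. \<psi> v = \<phi> (\<alpha> v))) \<longleftrightarrow>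
    {\<phi> ` Inl ` {..<s}, \<phi> ` Inr ` {..<t}} = {\<psi> ` Inl ` {..<s}, \<psi> ` Inr ` {..<t}}"
    (is "?related \<longleftrightarrow> _")
proof -
  have "?related \<longleftrightarrow> (\<exists>c. \<forall>d. \<psi> ` K_side s t d = \<phi> ` K_side s t (d = c))"
  proof
    assume ?related
    then obtain \<alpha> where aut: "graph_aut (K_V s t) (K_E s t) \<alpha>" and "\<forall>v\<in>K_V s t. \<psi> v = \<phi> (\<alpha> v)"
      by blast
    then have "\<psi> ` K_side s t d = \<phi> ` \<alpha> ` K_side s t d" for d
      unfolding K_side_def by (simp add: image_image)
    moreover obtain c where "\<And>d. \<alpha> ` K_side s t d = K_side s t (d = c)"
      using graph_aut_K_maps_sides[OF aut \<open>0 < s\<close>] by blast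
    ultimately show "\<exists>c. \<forall>d. \<psi> ` K_side s t d = \<phi> ` K_side s t (d = c)"
      by metis
  qed (use graph_aut_K_from_side_images[OF assms(1,2)] in blast)
  also have "\<dots> \<longleftrightarrow> {\<phi> ` K_side s t True, \<phi> ` K_side s t False} = {\<psi> ` K_side s t True, \<psi> ` K_side s t False}"
    by (auto simp: doubleton_eq_iff all_bool_eq ex_bool_eq)
  finally show ?thesis
    unfolding K_side_True K_side_False .
qed

definition side_images :: "nat \<Rightarrow> nat \<Rightarrow> (nat + nat \<Rightarrow> 'p) \<Rightarrow> 'p set \<times> 'p set" where
  "side_images s t \<phi> = (\<phi> ` Inl ` {..<s}, \<phi> ` Inr ` {..<t})"

lemma image_K_V: "\<phi> ` K_V s t = \<phi> ` Inl ` {..<s} \<union> \<phi> ` Inr ` {..<t}"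
  unfolding K_V_def by (rule image_Un)

lemma inj_on_K_V_iff:
  "inj_on \<phi> (K_V s t) \<longleftrightarrow>
    card (\<phi> ` Inl ` {..<s}) = s \<and> card (\<phi> ` Inr ` {..<t}) = t \<and> \<phi> ` Inl ` {..<s} \<inter> \<phi> ` Inr ` {..<t} = {}"
proof -
  have "Inl ` {..<s} - Inr ` {..<t} = Inl ` {..<s}" and "Inr ` {..<t} - Inl ` {..<s} = Inr ` {..<t}"
    by auto
  moreover have "inj_on \<phi> (Inl ` {..<s}) \<longleftrightarrow> card (\<phi> ` Inl ` {..<s}) = s"
    using inj_on_iff_eq_card[of "Inl ` {..<s}" \<phi>] by (simp add: card_image)
  moreover have "inj_on \<phi> (Inr ` {..<t}) \<longleftrightarrow> card (\<phi> ` Inr ` {..<t}) = t"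
    using inj_on_iff_eq_card[of "Inr ` {..<t}" \<phi>] by (simp add: card_image)
  ultimately show ?thesis
    unfolding K_V_def inj_on_Un by simp
qed

locale finite_projective_plane =
  fixes P :: "'p set" and L :: "'l set" and inc :: "'p \<Rightarrow> 'l \<Rightarrow> bool" and q :: nat
  assumes projective_plane: "projective_plane P L inc q"
begin

definition points_on :: "'l \<Rightarrow> 'p set" where
  "points_on l = {p \<in> P. inc p l}"

definition line_through :: "'p \<Rightarrow> 'p \<Rightarrow> 'l" where
  "line_through a b = (THE l. l \<in> L \<and> inc a l \<and> inc b l)"

lemma finite_points: "finite P"
  and finite_lines: "finite L"
  and card_lines: "card L = q\<^sup>2 + q + 1"
  and card_points_on: "l \<in> L \<Longrightarrow> card (points_on l) = q + 1"
  and card_pencil: "p \<in> P \<Longrightarrow> card {l \<in> L. inc p l} = q + 1"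
  using projective_plane unfolding projective_plane_def points_on_def by auto

lemma ex1_line:
  "a \<in> P \<Longrightarrow> b \<in> P \<Longrightarrow> a \<noteq> b \<Longrightarrow> \<exists>!l. l \<in> L \<and> inc a l \<and> inc b l"
  using projective_plane unfolding projective_plane_def by auto

lemma ex1_meet:
  "l \<in> L \<Longrightarrow> m \<in> L \<Longrightarrow> l \<noteq> m \<Longrightarrow> \<exists>!p. p \<in> P \<and> inc p l \<and> inc p m"
  using projective_plane unfolding projective_plane_def by auto

lemma finite_points_on: "finite (points_on l)"
  unfolding points_on_def using finite_points by simp

lemma line_through:
  assumes "a \<in> P" and "b \<in> P" and "a \<noteq> b"
  shows "line_through a b \<in> L" and "inc a (line_through a b)" and "inc b (line_through a b)"
  using theI'[OF ex1_line[OF assms]] unfolding line_through_def by auto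

lemma line_through_unique:
  assumes "a \<in> P" and "b \<in> P" and "a \<noteq> b" and "l \<in> L" and "inc a l" and "inc b l"
  shows "line_through a b = l"
  using ex1_line[OF assms(1-3)] line_through[OF assms(1-3)] assms(4-6) by blast

lemma line_through_commute:
  assumes "a \<in> P" and "b \<in> P" and "a \<noteq> b"
  shows "line_through a b = line_through b a"
  using assms line_through[OF assms] by (intro line_through_unique[symmetric]) auto

lemma lines_eq_if_two_common_points:
  assumes "a \<in> P" and "b \<in> P" and "a \<noteq> b" and "l \<in> L" and "m \<in> L"
    and "inc a l" and "inc b l" and "inc a m" and "inc b m"
  shows "l = m"
  using line_through_unique[OF assms(1-3)] assms(4-9) by metis

lemma card_points_on_diff:
  assumes "l \<in> L" and "m \<in> L" and "l \<noteq> m"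
  shows "card (points_on l - points_on m) = q"
proof -
  obtain p where "p \<in> P \<and> inc p l \<and> inc p m" and "\<forall>x. x \<in> P \<and> inc x l \<and> inc x m \<longrightarrow> x = p"
    using ex1_meet[OF assms] by blast
  then have "points_on l \<inter> points_on m = {p}"
    unfolding points_on_def by blast
  then show ?thesis
    using card_Diff_subset_Int[of "points_on l" "points_on m"] finite_points_on card_points_on[OF assms(1)]
    by simp
qed

lemma inj_on_line_through_points_on:
  assumes "c \<in> P" and "l \<in> L" and "\<not> inc c l"
  shows "inj_on (line_through c) (points_on l)"
proof (rule inj_onI, rule ccontr)
  fix x y
  assume x: "x \<in> points_on l" and y: "y \<in> points_on l"
    and eq: "line_through c x = line_through c y" and "x \<noteq> y"
  have "c \<noteq> x" and "c \<noteq> y"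
    using x y assms(3) unfolding points_on_def by auto
  then have "line_through c x = line_through x y"
    using x y eq line_through[OF \<open>c \<in> P\<close>] unfolding points_on_def
    by (metis (no_types, lifting) line_through_unique mem_Collect_eq \<open>x \<noteq> y\<close>)
  also have "\<dots> = l"
    using x y \<open>x \<noteq> y\<close> assms(2) unfolding points_on_def by (auto intro: line_through_unique)
  finally show False
    using line_through(2)[OF \<open>c \<in> P\<close> _ \<open>c \<noteq> x\<close>] x assms(3) unfolding points_on_def by auto
qed

definition distinct_joins :: "'p set \<Rightarrow> 'p set \<Rightarrow> bool" where
  "distinct_joins A B \<longleftrightarrow> inj_on (\<lambda>(a, b). line_through a b) (A \<times> B)"

lemma distinct_joinsD:
  assumes "distinct_joins A B" and "a \<in> A" "a' \<in> A" "b \<in> B" "b' \<in> B"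
    and "line_through a b = line_through a' b'"
  shows "a = a'" and "b = b'"
proof -
  have "(a, b) = (a', b')"
    using assms(1) unfolding distinct_joins_def by (rule inj_onD) (use assms in auto)
  then show "a = a'" and "b = b'"
    by auto
qed

lemma distinct_joins_swap:
  assumes "distinct_joins A B" and "A \<subseteq> P" and "B \<subseteq> P" and "A \<inter> B = {}"
  shows "distinct_joins B A"
  unfolding distinct_joins_def
proof (rule inj_onI, clarify)
  fix b a b' a'
  assume ba: "b \<in> B" "a \<in> A" "b' \<in> B" "a' \<in> A" and eq: "line_through b a = line_through b' a'"
  have "line_through a b = line_through a' b'"
    using eq ba assms(2-4) line_through_commute by (metis disjoint_iff subsetD)
  then show "b = b' \<and> a = a'"
    using distinct_joinsD[OF assms(1) ba(2,4,1,3)] by simp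
qed

text \<open>The lines joining \<open>b\<close> to the rest of \<open>B\<close> and those joining \<open>b\<close> to \<open>A\<close> are disjoint
  subsets of the pencil at \<open>b\<close>.\<close>

lemma card_joining_lines_le:
  assumes "A \<subseteq> P" and "B \<subseteq> P" and "A \<inter> B = {}" and "distinct_joins A B" and "b \<in> B"
  shows "card (line_through b ` (B - {b})) + card A \<le> q + 1"
proof -
  let ?J = "line_through b ` (B - {b})" and ?K = "(\<lambda>a. line_through a b) ` A"
  have b: "b \<in> P"
    using assms by auto
  have "a \<noteq> b" if "a \<in> A" for a
    using assms that by auto
  then have subset_pencil: "?J \<union> ?K \<subseteq> {l \<in> L. inc b l}"
    using assms b line_through by auto
  have "inj_on (\<lambda>a. line_through a b) A"
    using distinct_joinsD(1)[OF assms(4) _ _ \<open>b \<in> B\<close> \<open>b \<in> B\<close>] by (auto intro: inj_onI)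
  then have card_K: "card ?K = card A"
    by (rule card_image)
  have "?J \<inter> ?K = {}"
  proof (rule ccontr)
    assume "?J \<inter> ?K \<noteq> {}"
    then obtain a b' where a: "a \<in> A" and b': "b' \<in> B" "b' \<noteq> b"
      and eq: "line_through b b' = line_through a b"
      by auto
    have "a \<in> P" "b' \<in> P" "a \<noteq> b'"
      using a b' assms(1-3) by auto
    moreover have "inc b' (line_through a b)"
      using eq line_through(3)[OF b \<open>b' \<in> P\<close>] b' by metis
    ultimately have "line_through a b' = line_through a b"
      using line_through[OF \<open>a \<in> P\<close> b] \<open>a \<in> A\<close> assms(3) \<open>b \<in> B\<close>
      by (intro line_through_unique) auto
    then show False
      using distinct_joinsD(2)[OF assms(4) a a b'(1) \<open>b \<in> B\<close>] b' by auto
  qed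
  then have "card ?J + card A = card (?J \<union> ?K)"
    using card_K assms(1,2) finite_points
    by (metis card_Un_disjoint finite_Diff finite_imageI finite_subset)
  also have "\<dots> \<le> q + 1"
    using card_mono[OF _ subset_pencil] card_pencil[OF b] finite_lines by simp
  finally show ?thesis .
qed

lemma card_points_on_inter_le:
  assumes "B \<subseteq> P" and "c \<in> B" and "l \<in> L" and "\<not> inc c l"
  shows "card (points_on l \<inter> B) \<le> card (line_through c ` (B - {c}))"
proof (rule card_inj_on_le)
  show "inj_on (line_through c) (points_on l \<inter> B)"
    using inj_on_line_through_points_on[of c l] assms by (auto intro: inj_on_subset)
  show "line_through c ` (points_on l \<inter> B) \<subseteq> line_through c ` (B - {c})"
    using assms unfolding points_on_def by auto
  show "finite (line_through c ` (B - {c}))"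
    using assms(1) finite_points finite_subset by blast
qed

lemma card_le_if_few_joining_lines:
  assumes "B \<subseteq> P" and b: "b \<in> B" and "card (line_through b ` (B - {b})) \<le> n"
    and line_le: "\<And>l. l \<in> L \<Longrightarrow> card (points_on l \<inter> B) \<le> n"
  shows "card B \<le> n * (n - 1) + 1"
proof -
  let ?J = "line_through b ` (B - {b})"
  have "finite B" and "b \<in> P"
    using assms(1,2) finite_points finite_subset by auto
  have "B - {b} \<subseteq> (\<Union>l\<in>?J. points_on l \<inter> B - {b})"
  proof
    fix x
    assume x: "x \<in> B - {b}"
    then have "x \<in> P" and "b \<noteq> x"
      using assms(1) by auto
    then show "x \<in> (\<Union>l\<in>?J. points_on l \<inter> B - {b})"
      using x line_through(3)[OF \<open>b \<in> P\<close>] unfolding points_on_def by blast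
  qed
  then have "card (B - {b}) \<le> card (\<Union>l\<in>?J. points_on l \<inter> B - {b})"
    using \<open>finite B\<close> by (intro card_mono) auto
  also have "\<dots> \<le> (\<Sum>l\<in>?J. card (points_on l \<inter> B - {b}))"
    by (rule card_UN_le) (use \<open>finite B\<close> in blast)
  also have "\<dots> \<le> (\<Sum>l\<in>?J. n - 1)"
  proof (rule sum_mono)
    fix l
    assume "l \<in> ?J"
    then obtain x where "x \<in> B - {b}" and "l = line_through b x"
      by blast
    then have "b \<in> points_on l \<inter> B" and "l \<in> L"
      using b \<open>b \<in> P\<close> assms(1) line_through[of b x] unfolding points_on_def by auto
    then show "card (points_on l \<inter> B - {b}) \<le> n - 1"
      using line_le[of l] \<open>finite B\<close> by simp
  qed
  also have "\<dots> \<le> n * (n - 1)"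
    using assms(3) by simp
  finally show ?thesis
    using b by simp
qed

lemma collinear_if_distinct_joins:
  assumes q: "q = (n + 1)\<^sup>2"
    and "A \<subseteq> P" and "B \<subseteq> P" and "A \<inter> B = {}" and "distinct_joins A B"
    and "q - n < card A" and "q - n < card B"
  shows "\<exists>m\<in>L. B \<subseteq> points_on m"
proof (rule ccontr)
  assume not_collinear: "\<not> (\<exists>m\<in>L. B \<subseteq> points_on m)"
  have q_expand: "q = n * n + 2 * n + 1"
    using q by (simp add: power2_eq_square)
  have joining_le: "card (line_through b ` (B - {b})) \<le> n" if "b \<in> B" for b
    using card_joining_lines_le[OF assms(2-5) that] assms(6) q_expand by linarith
  \<comment> \<open>Project the points of \<open>B\<close> on \<open>l\<close> from a point of \<open>B\<close> off \<open>l\<close>.\<close>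
  have "card (points_on l \<inter> B) \<le> n" if l: "l \<in> L" for l
  proof -
    obtain c where "c \<in> B" and "c \<notin> points_on l"
      using not_collinear l by blast
    then have "\<not> inc c l"
      using assms(3) unfolding points_on_def by auto
    then show ?thesis
      using card_points_on_inter_le[OF assms(3) \<open>c \<in> B\<close> l] joining_le[OF \<open>c \<in> B\<close>] by simp
  qed
  moreover obtain b where "b \<in> B"
    using assms(7) by fastforce
  ultimately have "card B \<le> n * (n - 1) + 1"
    using card_le_if_few_joining_lines[OF assms(3)] joining_le by blast
  moreover have "n * (n - 1) \<le> n * n"
    by simp
  ultimately show False
    using assms(7) q_expand by linarith
qed

lemma lines_eq_if_common_subset:
  assumes "C \<subseteq> points_on l" and "C \<subseteq> points_on m" and "2 \<le> card C" and "l \<in> L" and "m \<in> L"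
  shows "l = m"
proof -
  obtain a b where "a \<in> C" "b \<in> C" "a \<noteq> b"
    using two_distinct_elements[OF assms(3)] by blast
  then show ?thesis
    using assms lines_eq_if_two_common_points[of a b l m] unfolding points_on_def by blast
qed

lemma disjoint_from_line_if_distinct_joins:
  assumes "distinct_joins A B" and "A \<subseteq> P" and "A \<inter> B = {}"
    and "m \<in> L" and "B \<subseteq> points_on m" and "2 \<le> card B"
  shows "A \<inter> points_on m = {}"
proof (rule ccontr)
  assume "A \<inter> points_on m \<noteq> {}"
  then obtain a where a: "a \<in> A" "inc a m"
    unfolding points_on_def by blast
  obtain b1 b2 where b: "b1 \<in> B" "b2 \<in> B" "b1 \<noteq> b2"
    using two_distinct_elements[OF assms(6)] by blast
  have "line_through a b = m" if "b \<in> B" for b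
    using that a assms(2-5) unfolding points_on_def by (intro line_through_unique) auto
  then show False
    using distinct_joinsD(2)[OF assms(1) a(1) a(1) b(1,2)] b by simp
qed

lemma distinct_joins_if_on_two_lines:
  assumes "l \<in> L" and "m \<in> L"
    and "A \<subseteq> points_on l - points_on m" and "B \<subseteq> points_on m - points_on l"
  shows "distinct_joins A B"
  unfolding distinct_joins_def
proof (rule inj_onI, clarify)
  fix a b a' b'
  assume ab: "a \<in> A" "b \<in> B" "a' \<in> A" "b' \<in> B" and eq: "line_through a b = line_through a' b'"
  let ?k = "line_through a b"
  have points: "a \<in> P" "b \<in> P" "a' \<in> P" "b' \<in> P"
    and on_l: "inc a l" "inc a' l" "\<not> inc b l" "\<not> inc b' l"
    and on_m: "inc b m" "inc b' m" "\<not> inc a m" "\<not> inc a' m"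
    using ab assms(3,4) unfolding points_on_def by auto
  then have k: "?k \<in> L" "inc a ?k" "inc b ?k" "inc a' ?k" "inc b' ?k"
    using eq line_through[of a b] line_through[of a' b'] by auto
  show "a = a' \<and> b = b'"
  proof (intro conjI; rule ccontr)
    assume "a \<noteq> a'"
    then have "?k = l"
      using lines_eq_if_two_common_points[of a a' ?k l] points k on_l assms(1) by blast
    then show False
      using k on_l by simp
  next
    assume "b \<noteq> b'"
    then have "?k = m"
      using lines_eq_if_two_common_points[of b b' ?k m] points k on_m assms(2) by blast
    then show False
      using k on_m by simp
  qed
qed

definition distinct_join_pairs :: "nat \<Rightarrow> nat \<Rightarrow> ('p set \<times> 'p set) set" where
  "distinct_join_pairs s t = {(A, B). A \<subseteq> P \<and> B \<subseteq> P \<and> A \<inter> B = {} \<and>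
     card A = s \<and> card B = t \<and> distinct_joins A B}"

definition two_line_pairs :: "nat \<Rightarrow> nat \<Rightarrow> ('p set \<times> 'p set) set" where
  "two_line_pairs s t = {(A, B). \<exists>l\<in>L. \<exists>m\<in>L. l \<noteq> m \<and>
     A \<subseteq> points_on l - points_on m \<and> B \<subseteq> points_on m - points_on l \<and> card A = s \<and> card B = t}"

lemma on_two_lines_if_distinct_joins:
  assumes q: "q = (n + 1)\<^sup>2" and "q - n < card A" and "q - n < card B"
    and "A \<subseteq> P" and "B \<subseteq> P" and "A \<inter> B = {}" and "distinct_joins A B"
  shows "\<exists>l\<in>L. \<exists>m\<in>L. l \<noteq> m \<and> A \<subseteq> points_on l - points_on m \<and> B \<subseteq> points_on m - points_on l"
proof -
  have "B \<inter> A = {}" and "distinct_joins B A"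
    using assms(4-7) distinct_joins_swap by auto
  have "2 \<le> card A" and "2 \<le> card B"
    using assms(1-3) by (simp_all add: power2_eq_square)
  obtain m where m: "m \<in> L" "B \<subseteq> points_on m"
    using collinear_if_distinct_joins[OF assms(1,4-7,2,3)] by blast
  obtain l where l: "l \<in> L" "A \<subseteq> points_on l"
    using collinear_if_distinct_joins[OF q assms(5,4) \<open>B \<inter> A = {}\<close> \<open>distinct_joins B A\<close> assms(3,2)]
    by blast
  have "A \<inter> points_on m = {}"
    using disjoint_from_line_if_distinct_joins[OF assms(7,4,6) m \<open>2 \<le> card B\<close>] .
  then have A_on_off: "A \<subseteq> points_on l - points_on m"
    using l(2) by blast
  have "B \<inter> points_on l = {}"
    using disjoint_from_line_if_distinct_joins[OF \<open>distinct_joins B A\<close> assms(5) \<open>B \<inter> A = {}\<close> l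
        \<open>2 \<le> card A\<close>] .
  then have B_on_off: "B \<subseteq> points_on m - points_on l"
    using m(2) by blast
  have "l \<noteq> m"
    using A_on_off \<open>2 \<le> card A\<close> by (metis Diff_cancel card.empty not_numeral_le_zero subset_empty)
  then show ?thesis
    using l(1) m(1) A_on_off B_on_off by blast
qed

lemma distinct_join_pairs_eq_two_line_pairs:
  assumes q: "q = (n + 1)\<^sup>2" and "q - n < s" and "q - n < t"
  shows "distinct_join_pairs s t = two_line_pairs s t"
proof (intro set_eqI iffI; clarify)
  fix A B
  assume "(A, B) \<in> distinct_join_pairs s t"
  then show "(A, B) \<in> two_line_pairs s t"
    using on_two_lines_if_distinct_joins[OF q, of A B] assms
    unfolding distinct_join_pairs_def two_line_pairs_def by auto
next
  fix A B
  assume "(A, B) \<in> two_line_pairs s t"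
  then obtain l m where "l \<in> L" "m \<in> L"
    and on_off: "A \<subseteq> points_on l - points_on m" "B \<subseteq> points_on m - points_on l"
    and "card A = s" "card B = t"
    unfolding two_line_pairs_def by auto
  moreover have "distinct_joins A B"
    using distinct_joins_if_on_two_lines calculation by blast
  moreover have "A \<subseteq> P" "B \<subseteq> P" "A \<inter> B = {}"
    using on_off unfolding points_on_def by auto
  ultimately show "(A, B) \<in> distinct_join_pairs s t"
    unfolding distinct_join_pairs_def by simp
qed

lemma two_line_pairsD:
  assumes "(A, B) \<in> two_line_pairs s t"
  shows "A \<inter> B = {}" and "card A = s" and "card B = t"
  using assms unfolding two_line_pairs_def by auto

lemma finite_two_line_pairs: "finite (two_line_pairs s t)"
proof (rule finite_subset)
  show "two_line_pairs s t \<subseteq> Pow P \<times> Pow P"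
    unfolding two_line_pairs_def points_on_def by auto
  show "finite (Pow P \<times> Pow P)"
    using finite_points by simp
qed

lemma two_line_pairs_swap:
  "(A, B) \<in> two_line_pairs s t \<Longrightarrow> (B, A) \<in> two_line_pairs t s"
  unfolding two_line_pairs_def by (simp, metis)

definition subsets_on_off :: "nat \<Rightarrow> 'l \<Rightarrow> 'l \<Rightarrow> 'p set set" where
  "subsets_on_off k l m = {A. A \<subseteq> points_on l - points_on m \<and> card A = k}"

lemma finite_subsets_on_off: "finite (subsets_on_off k l m)"
  unfolding subsets_on_off_def using finite_points_on by simp

lemma card_subsets_on_off:
  assumes "l \<in> L" and "m \<in> L" and "l \<noteq> m"
  shows "card (subsets_on_off k l m) = q choose k"
  using n_subsets[of "points_on l - points_on m" k] finite_points_on card_points_on_diff[OF assms]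
  unfolding subsets_on_off_def by simp

lemma two_line_pairs_eq_UN:
  "two_line_pairs s t = (\<Union>(l, m)\<in>(SIGMA l:L. L - {l}). subsets_on_off s l m \<times> subsets_on_off t m l)"
proof (intro equalityI subsetI)
  fix x
  assume "x \<in> two_line_pairs s t"
  then obtain l m A B where "x = (A, B)" "l \<in> L" "m \<in> L" "l \<noteq> m"
    "A \<in> subsets_on_off s l m" "B \<in> subsets_on_off t m l"
    unfolding two_line_pairs_def subsets_on_off_def by blast
  then show "x \<in> (\<Union>(l, m)\<in>(SIGMA l:L. L - {l}). subsets_on_off s l m \<times> subsets_on_off t m l)"
    by (intro UN_I[of "(l, m)"]) auto
next
  fix x
  assume "x \<in> (\<Union>(l, m)\<in>(SIGMA l:L. L - {l}). subsets_on_off s l m \<times> subsets_on_off t m l)"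
  then obtain l m A B where "x = (A, B)" "l \<in> L" "m \<in> L" "l \<noteq> m"
    "A \<subseteq> points_on l - points_on m" "card A = s" "B \<subseteq> points_on m - points_on l" "card B = t"
    unfolding subsets_on_off_def by auto
  then show "x \<in> two_line_pairs s t"
    unfolding two_line_pairs_def by (simp, metis)
qed

lemma card_two_line_pairs:
  assumes "2 \<le> s" and "2 \<le> t"
  shows "card (two_line_pairs s t) = card L * (card L - 1) * (q choose s) * (q choose t)"
proof -
  let ?Off = "SIGMA l:L. L - {l}"
  have disjoint: "(subsets_on_off s l m \<times> subsets_on_off t m l) \<inter>
      (subsets_on_off s l' m' \<times> subsets_on_off t m' l') = {}"
    if lm: "(l, m) \<in> ?Off" "(l', m') \<in> ?Off" "(l, m) \<noteq> (l', m')" for l m l' m'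
  proof (rule ccontr)
    assume "(subsets_on_off s l m \<times> subsets_on_off t m l) \<inter>
      (subsets_on_off s l' m' \<times> subsets_on_off t m' l') \<noteq> {}"
    then obtain A B where "A \<subseteq> points_on l - points_on m" "A \<subseteq> points_on l' - points_on m'"
      and "B \<subseteq> points_on m - points_on l" "B \<subseteq> points_on m' - points_on l'"
      and "card A = s" "card B = t"
      unfolding subsets_on_off_def by auto
    then have "l = l'" and "m = m'"
      using lines_eq_if_common_subset[of A l l'] lines_eq_if_common_subset[of B m m'] lm(1,2) assms
      by auto
    then show False
      using lm(3) by simp
  qed
  have "card (two_line_pairs s t) = (\<Sum>(l, m)\<in>?Off. card (subsets_on_off s l m \<times> subsets_on_off t m l))"
    unfolding two_line_pairs_eq_UN using finite_lines finite_subsets_on_off disjoint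
    by (subst card_UN_disjoint) (auto simp: split_def)
  also have "\<dots> = (\<Sum>(l, m)\<in>?Off. (q choose s) * (q choose t))"
  proof (rule sum.cong)
    fix x
    assume "x \<in> ?Off"
    then obtain l m where "x = (l, m)" and "l \<in> L" "m \<in> L" "l \<noteq> m"
      by auto
    then show "(case x of (l, m) \<Rightarrow> card (subsets_on_off s l m \<times> subsets_on_off t m l)) =
        (case x of (l, m) \<Rightarrow> (q choose s) * (q choose t))"
      using card_subsets_on_off[of l m s] card_subsets_on_off[of m l t] by (simp add: card_cartesian_product)
  qed simp
  also have "\<dots> = card L * (card L - 1) * (q choose s) * (q choose t)"
    using finite_lines by simp
  finally show ?thesis .
qed

lemma edge_line_doubleton: "edge_line L inc \<phi> {u, v} = line_through (\<phi> u) (\<phi> v)"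
  unfolding edge_line_def line_through_def by simp

lemma inj_on_edge_line_K_iff:
  assumes "inj_on \<phi> (K_V s t)"
  shows "inj_on (edge_line L inc \<phi>) (K_E s t) \<longleftrightarrow> distinct_joins (\<phi> ` Inl ` {..<s}) (\<phi> ` Inr ` {..<t})"
proof -
  let ?I = "{..<s} \<times> {..<t}"
  let ?edge = "\<lambda>(i, j). {Inl i, Inr j} :: (nat + nat) set"
  let ?ends = "\<lambda>(i, j). (\<phi> (Inl i), \<phi> (Inr j))"
  have "K_E s t = ?edge ` ?I"
    unfolding K_E_def by auto
  moreover have "inj_on ?edge ?I"
    by (auto intro!: inj_onI simp: doubleton_eq_iff)
  moreover have "\<phi> ` Inl ` {..<s} \<times> \<phi> ` Inr ` {..<t} = ?ends ` ?I"
    by auto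
  moreover have "inj_on ?ends ?I"
    using assms unfolding K_V_def by (auto intro!: inj_onI dest: inj_onD)
  moreover have "edge_line L inc \<phi> \<circ> ?edge = (\<lambda>(a, b). line_through a b) \<circ> ?ends"
    by (auto simp: edge_line_doubleton)
  ultimately show ?thesis
    unfolding distinct_joins_def by (simp add: comp_inj_on_iff)
qed

lemma side_images_embeddings:
  "side_images s t ` embeddings P L inc (K_V s t) (K_E s t) = distinct_join_pairs s t"
proof (intro equalityI subsetI)
  fix x
  assume "x \<in> side_images s t ` embeddings P L inc (K_V s t) (K_E s t)"
  then obtain \<phi> where x: "x = side_images s t \<phi>" and inj: "inj_on \<phi> (K_V s t)"
    and "\<phi> ` K_V s t \<subseteq> P" and "inj_on (edge_line L inc \<phi>) (K_E s t)"
    unfolding embeddings_def is_embedding_def by blast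
  then show "x \<in> distinct_join_pairs s t"
    using inj[unfolded inj_on_K_V_iff] inj_on_edge_line_K_iff[OF inj]
    unfolding side_images_def distinct_join_pairs_def image_K_V by simp
next
  fix x
  assume "x \<in> distinct_join_pairs s t"
  then obtain A B where x: "x = (A, B)" and sides: "A \<subseteq> P" "B \<subseteq> P"
    "A \<inter> B = {}" "card A = s" "card B = t" "distinct_joins A B"
    unfolding distinct_join_pairs_def by blast
  obtain g h where "g ` {..<s} = A" and "h ` {..<t} = B"
    using ex_bij_betw_nat_finite[of A] ex_bij_betw_nat_finite[of B] finite_points finite_subset sides
    by (metis atLeast0LessThan bij_betw_imp_surj_on)
  define \<phi> where "\<phi> = restrict (case_sum g h) (K_V s t)"
  have images: "\<phi> ` Inl ` {..<s} = A" "\<phi> ` Inr ` {..<t} = B"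
    unfolding \<phi>_def K_V_def using \<open>g ` {..<s} = A\<close> \<open>h ` {..<t} = B\<close> by (auto simp: image_image)
  then have inj: "inj_on \<phi> (K_V s t)"
    using sides by (simp add: inj_on_K_V_iff)
  have "\<phi> \<in> embeddings P L inc (K_V s t) (K_E s t)"
    using inj inj_on_edge_line_K_iff[OF inj] sides images
    unfolding embeddings_def is_embedding_def image_K_V by (simp add: \<phi>_def)
  moreover have "side_images s t \<phi> = x"
    unfolding side_images_def images x ..
  ultimately show "x \<in> side_images s t ` embeddings P L inc (K_V s t) (K_E s t)"
    by blast
qed

lemma n_pi_K_eq_card_unordered_pairs:
  assumes "0 < s"
  shows "n_pi P L inc (K_V s t) (K_E s t) = card ((\<lambda>(A, B). {A, B}) ` distinct_join_pairs s t)"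
proof -
  let ?X = "embeddings P L inc (K_V s t) (K_E s t)"
  let ?f = "(\<lambda>(A, B). {A, B}) \<circ> side_images s t"
  have "card (?X // emb_equiv P L inc (K_V s t) (K_E s t)) = card (?f ` ?X)"
  proof (rule card_quotient_eq_card_image)
    show "emb_equiv P L inc (K_V s t) (K_E s t) \<subseteq> ?X \<times> ?X"
      unfolding emb_equiv_def by auto
    show "(\<phi>, \<psi>) \<in> emb_equiv P L inc (K_V s t) (K_E s t) \<longleftrightarrow> ?f \<phi> = ?f \<psi>"
      if "\<phi> \<in> ?X" and "\<psi> \<in> ?X" for \<phi> \<psi>
      using that K_related_iff_same_sides[of \<phi> s t \<psi>] assms
      unfolding emb_equiv_def embeddings_def is_embedding_def side_images_def by auto
  qed
  then show ?thesis
    unfolding n_pi_def image_comp[symmetric] side_images_embeddings .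
qed

end

theorem corollary4p6:
  fixes P :: "'p set" and L :: "'l set" and inc :: "'p \<Rightarrow> 'l \<Rightarrow> bool"
    and q n s t :: nat
  assumes "projective_plane P L inc q"
    and "q = (n + 1)^2"
    and "s \<le> q" and "t \<le> q" and "q - n < s" and "q - n < t"
  shows "(s \<noteq> t \<longrightarrow> n_pi P L inc (K_V s t) (K_E s t)
            = 2 * ((q^2 + q + 1) choose 2) * (q choose s) * (q choose t))
       \<and> n_pi P L inc (K_V s s) (K_E s s) = ((q^2 + q + 1) choose 2) * (q choose s)^2"
proof -
  interpret finite_projective_plane P L inc q
    by unfold_locales (rule assms(1))
  have "2 \<le> s" and "2 \<le> t"
    using assms(2,5,6) by (simp_all add: power2_eq_square)
  have lines: "card L * (card L - 1) = 2 * ((q^2 + q + 1) choose 2)"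
    unfolding card_lines by (metis Suc_1 binomial_absorption choose_one)
  have pairs: "n_pi P L inc (K_V s t) (K_E s t) = card ((\<lambda>(A, B). {A, B}) ` two_line_pairs s t)"
    if "q - n < s" and "q - n < t" for s t
    using n_pi_K_eq_card_unordered_pairs distinct_join_pairs_eq_two_line_pairs[OF assms(2) that] that
    by simp
  have "n_pi P L inc (K_V s t) (K_E s t) = card (two_line_pairs s t)" if "s \<noteq> t"
    unfolding pairs[OF assms(5,6)] using that two_line_pairsD(2,3)
    by (intro card_image inj_on_doubletons_if_card_neq) auto
  moreover have "card (two_line_pairs s s) = 2 * n_pi P L inc (K_V s s) (K_E s s)"
    unfolding pairs[OF assms(5,5)]
  proof (rule card_eq_twice_card_doubletons)
    fix A B
    assume "(A, B) \<in> two_line_pairs s s"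
    then show "(B, A) \<in> two_line_pairs s s" and "A \<noteq> B"
      using two_line_pairs_swap two_line_pairsD[of A B s s] \<open>2 \<le> s\<close> by auto
  qed (rule finite_two_line_pairs)
  ultimately show ?thesis
    using card_two_line_pairs[OF \<open>2 \<le> s\<close> \<open>2 \<le> t\<close>] card_two_line_pairs[OF \<open>2 \<le> s\<close> \<open>2 \<le> s\<close>] lines
    by (simp add: power2_eq_square)
qed

end
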